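(* For $q>1$ let $N_q$ be a random variable with $\mathbb{P}\{N_q=k\}=\frac{1}{e_{q^{-2}}(q^{-1})}\frac{q^{-k}}{(q^{-2};q^{-2})_k}$, $k=0,1,2,\dots$. Then as $q\downarrow1$ the distribution of $2(\log q)N_q+\log(q-1)$ converges weakly to the distribution on $\mathbb{R}$ with density $x\mapsto\frac{1}{\sqrt{2\pi}}\exp\big(-\tfrac12(x+e^{-x})\big)$.
   Context: For $p\in(0,1)$: $(z;p)_k:=\prod_{j=0}^{k-1}(1-zp^j)$, $(z;p)_\infty:=\prod_{j\ge0}(1-zp^j)$, and $e_p(z):=1/(z;p)_\infty=\sum_{k\ge0}z^k/(p;p)_k$ for $|z|<1$. *)

theory Defs
  imports "HOL-Probability.Probability"
begin

definition qpoch :: "real \<Rightarrow> real \<Rightarrow> nat \<Rightarrow> real" where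
  "qpoch z p k = (\<Prod>j<k. 1 - z * p ^ j)"

definition e_q :: "real \<Rightarrow> real \<Rightarrow> real" where
  "e_q p z = (\<Sum>k. z ^ k / qpoch p p k)"

definition pN :: "real \<Rightarrow> nat \<Rightarrow> real" where
  "pN q k = (1 / e_q ((inverse q)^2) (inverse q)) * ((inverse q) ^ k / qpoch ((inverse q)^2) ((inverse q)^2) k)"

definition N_law :: "real \<Rightarrow> nat measure" where
  "N_law q = density (count_space UNIV) (\<lambda>k. ennreal (pN q k))"

definition scaled_law :: "real \<Rightarrow> real measure" where
  "scaled_law q = distr (N_law q) borel (\<lambda>k. 2 * ln q * real k + ln (q - 1))"

definition limit_density :: "real \<Rightarrow> real" where
  "limit_density x = exp (- (x + exp (- x)) / 2) / sqrt (2 * pi)"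

definition limit_law :: "real measure" where
  "limit_law = density lborel (\<lambda>x. ennreal (limit_density x))"

end

theory Submission
  imports Defs
begin

(* Write p = q^-2 and x_k = 2 k ln q + ln (q - 1).  Since
   (p;p)_k = (p;p)_\<infinity> / (p^(k+1);p)_\<infinity> and q^-k = sqrt (q - 1) exp (-x_k/2), the law of N_q
   is proportional to W_k = exp (-x_k/2 - G_k) with G_k = -ln (p^(k+1);p)_\<infinity>.  Termwise
   comparison with a geometric series pins G_k between e^(-x_k)/(q+1) and
   e^(-x_k)/(q+1) / (1 - (q-1) e^(-x_k)/q^2), so W_k is close to f x_k, where
   f t = exp (-(t + e^(-t))/2) is limit_kernel.  The x_k form a grid of mesh 2 ln q -> 0, hence
   2 ln q times the unnormalised mass of {x_k <= x} is the integral of a step function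
   converging pointwise to f on (-\<infinity>, x].  These step functions are dominated by a multiple
   of a translate of f, so by dominated convergence the cdf tends to the integral of f up to x
   divided by the integral of f, which is sqrt (2 pi). *)

lemma exp_half_ln: "0 < x \<Longrightarrow> exp (ln x / 2) = sqrt x"
  by (simp add: powr_def powr_half_sqrt[symmetric])

lemma minus_ln_one_minus_bounds:
  fixes v :: real
  assumes "0 < v" "v < 1"
  shows "v \<le> - ln (1 - v)" and "- ln (1 - v) \<le> v / (1 - v)"
proof -
  show "v \<le> - ln (1 - v)"
    using ln_le_minus_one[of "1 - v"] assms by simp
  have "ln (1 / (1 - v)) \<le> 1 / (1 - v) - 1"
    using assms by (intro ln_le_minus_one) auto
  then show "- ln (1 - v) \<le> v / (1 - v)"
    using assms by (simp add: ln_div field_simps)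
qed

lemma geometric_sums_shift:
  fixes p :: real
  assumes "\<bar>p\<bar> < 1"
  shows "(\<lambda>i. p ^ (i + m)) sums (p ^ m / (1 - p))"
proof -
  have "(\<lambda>i. p ^ i) sums (1 / (1 - p))"
    using assms by (intro geometric_sums) simp
  from sums_mult[OF this, of "p ^ m"] show ?thesis
    by (simp add: power_add mult.commute)
qed

definition qpoch_log_tail :: "real \<Rightarrow> nat \<Rightarrow> real" where
  "qpoch_log_tail p k = (\<Sum>i. - ln (1 - p ^ (i + k + 1)))"

lemma qpoch_log_tail_bounds:
  fixes p :: real
  assumes "0 < p" "p < 1"
  shows "summable (\<lambda>i. - ln (1 - p ^ (i + k + 1)))"
    and "p ^ (k + 1) / (1 - p) \<le> qpoch_log_tail p k"
    and "qpoch_log_tail p k \<le> p ^ (k + 1) / (1 - p) / (1 - p ^ (k + 1))"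
proof -
  have geom: "(\<lambda>i. p ^ (i + k + 1)) sums (p ^ (k + 1) / (1 - p))"
    using geometric_sums_shift[of p "k + 1"] assms by (simp add: add.assoc)
  have power_lt_1: "p ^ (n + 1) < 1" for n
    using power_Suc_less_one[OF assms] by simp
  have pk: "0 < p ^ (k + 1)" "p ^ (k + 1) < 1"
    using assms power_lt_1 by simp_all
  have term_lower: "p ^ (i + k + 1) \<le> - ln (1 - p ^ (i + k + 1))" for i
    using assms power_lt_1 by (intro minus_ln_one_minus_bounds) simp_all
  have term_upper: "- ln (1 - p ^ (i + k + 1)) \<le> p ^ (i + k + 1) / (1 - p ^ (k + 1))" for i
  proof -
    have "p ^ (i + k + 1) \<le> p ^ (k + 1)"
      using assms by (intro power_decreasing) auto
    then have "p ^ (i + k + 1) / (1 - p ^ (i + k + 1)) \<le> p ^ (i + k + 1) / (1 - p ^ (k + 1))"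
      using pk power_lt_1[of "i + k"] assms by (intro divide_left_mono mult_pos_pos) auto
    moreover have "- ln (1 - p ^ (i + k + 1)) \<le> p ^ (i + k + 1) / (1 - p ^ (i + k + 1))"
      using assms power_lt_1 by (intro minus_ln_one_minus_bounds) simp_all
    ultimately show ?thesis by linarith
  qed
  have geom': "(\<lambda>i. p ^ (i + k + 1) / (1 - p ^ (k + 1))) sums (p ^ (k + 1) / (1 - p) / (1 - p ^ (k + 1)))"
    using geom by (rule sums_divide)
  show summable: "summable (\<lambda>i. - ln (1 - p ^ (i + k + 1)))"
  proof (rule summable_comparison_test'[OF sums_summable[OF geom']])
    fix i
    have "0 \<le> - ln (1 - p ^ (i + k + 1))"
      using term_lower[of i] zero_less_power[OF assms(1), of "i + k + 1"] by linarith
    then show "norm (- ln (1 - p ^ (i + k + 1))) \<le> p ^ (i + k + 1) / (1 - p ^ (k + 1))"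
      using term_upper[of i] by simp
  qed
  show "p ^ (k + 1) / (1 - p) \<le> qpoch_log_tail p k"
    unfolding qpoch_log_tail_def using term_lower by (intro sums_le[OF _ geom summable_sums[OF summable]])
  show "qpoch_log_tail p k \<le> p ^ (k + 1) / (1 - p) / (1 - p ^ (k + 1))"
    unfolding qpoch_log_tail_def using term_upper by (intro sums_le[OF _ summable_sums[OF summable] geom'])
qed

lemma qpoch_log_tail_nonneg:
  fixes p :: real
  assumes "0 < p" "p < 1"
  shows "0 \<le> qpoch_log_tail p k"
  using assms by (intro order.trans[OF _ qpoch_log_tail_bounds(2)[OF assms]]) simp

lemma qpoch_eq_exp_log_tail:
  fixes p :: real
  assumes "0 < p" "p < 1"
  shows "qpoch p p k = exp (qpoch_log_tail p k - qpoch_log_tail p 0)"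
proof -
  have "qpoch p p k = (\<Prod>j<k. exp (ln (1 - p ^ (j + 1))))"
    unfolding qpoch_def using power_Suc_less_one[OF assms] by (intro prod.cong) simp_all
  also have "\<dots> = exp (- (\<Sum>j<k. - ln (1 - p ^ (j + 1))))"
    by (simp add: exp_sum sum_negf)
  also have "(\<Sum>j<k. - ln (1 - p ^ (j + 1))) = qpoch_log_tail p 0 - qpoch_log_tail p k"
    using suminf_split_initial_segment[OF qpoch_log_tail_bounds(1)[OF assms, of 0], of k]
    by (simp add: qpoch_log_tail_def add_ac)
  finally show ?thesis by simp
qed

definition scaled_point :: "real \<Rightarrow> nat \<Rightarrow> real" where
  "scaled_point q k = 2 * ln q * real k + ln (q - 1)"

definition point_weight :: "real \<Rightarrow> nat \<Rightarrow> real" where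
  "point_weight q k = exp (- scaled_point q k / 2) * exp (- qpoch_log_tail (inverse q ^ 2) k)"

lemma inverse_power2_bounds:
  fixes q :: real
  assumes "1 < q"
  shows "0 < inverse q ^ 2" and "inverse q ^ 2 < 1"
  using assms by (simp_all add: power_less_one_iff inverse_less_1_iff)

lemma exp_minus_half_scaled_point:
  assumes "1 < q"
  shows "exp (- scaled_point q k / 2) = inverse q ^ k / sqrt (q - 1)"
proof -
  have "- scaled_point q k / 2 = - (real k * ln q) - ln (q - 1) / 2"
    by (simp add: scaled_point_def field_simps)
  then have "exp (- scaled_point q k / 2) = inverse (exp (real k * ln q)) / exp (ln (q - 1) / 2)"
    by (simp add: exp_diff exp_minus)
  also have "exp (real k * ln q) = q ^ k"
    using assms by (subst exp_of_nat_mult) simp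
  also have "exp (ln (q - 1) / 2) = sqrt (q - 1)"
    using assms by (simp add: exp_half_ln)
  finally show ?thesis
    by (simp add: power_inverse)
qed

lemma exp_minus_scaled_point:
  assumes "1 < q"
  shows "exp (- scaled_point q k) = inverse q ^ (2 * k) / (q - 1)"
proof -
  have "exp (- scaled_point q k) = exp (- scaled_point q k / 2) ^ 2"
    by (simp add: exp_of_nat_mult[symmetric])
  also have "\<dots> = inverse q ^ (2 * k) / (q - 1)"
    unfolding exp_minus_half_scaled_point[OF assms]
    using assms by (simp add: power_divide power_mult mult.commute)
  finally show ?thesis .
qed

lemma qpoch_log_tail_scaled_bounds:
  fixes q :: real and k :: nat
  assumes q: "1 < q"
  defines "E \<equiv> exp (- scaled_point q k)"
  shows "E / (q + 1) \<le> qpoch_log_tail (inverse q ^ 2) k"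
    and "qpoch_log_tail (inverse q ^ 2) k \<le> E / (q + 1) / (1 - (q - 1) * E / q\<^sup>2)"
proof -
  let ?p = "inverse q ^ 2"
  have pk: "?p ^ (k + 1) = inverse q ^ (2 * k) / q\<^sup>2"
    by (simp add: power_mult[symmetric] power_add divide_inverse power_inverse)
  have E: "E = inverse q ^ (2 * k) / (q - 1)"
    unfolding E_def by (rule exp_minus_scaled_point[OF q])
  have "1 - ?p = (q - 1) * (q + 1) / q\<^sup>2"
    using q by (simp add: field_simps power2_eq_square)
  then have eq1: "?p ^ (k + 1) / (1 - ?p) = E / (q + 1)"
    unfolding pk E using q by simp
  have eq2: "?p ^ (k + 1) = (q - 1) * E / q\<^sup>2"
    unfolding pk E using q by simp
  note bounds = qpoch_log_tail_bounds(2,3)[OF inverse_power2_bounds[OF q], of k]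
  show "E / (q + 1) \<le> qpoch_log_tail ?p k"
    using bounds(1) unfolding eq1 .
  show "qpoch_log_tail ?p k \<le> E / (q + 1) / (1 - (q - 1) * E / q\<^sup>2)"
  proof -
    have "qpoch_log_tail ?p k \<le> E / (q + 1) / (1 - ?p ^ (k + 1))"
      using bounds(2) unfolding eq1 .
    then show ?thesis unfolding eq2 .
  qed
qed

lemma point_weight_pos: "0 < point_weight q k"
  by (simp add: point_weight_def)

lemma summable_point_weight:
  assumes "1 < q"
  shows "summable (point_weight q)"
proof (rule summable_comparison_test'[of "\<lambda>k. inverse q ^ k / sqrt (q - 1)"])
  show "summable (\<lambda>k. inverse q ^ k / sqrt (q - 1))"
    using assms by (intro summable_divide summable_geometric) (simp add: inverse_less_1_iff)
  fix k
  have "exp (- qpoch_log_tail (inverse q ^ 2) k) \<le> 1"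
    using qpoch_log_tail_nonneg[of "inverse q ^ 2" k] inverse_power2_bounds[OF assms] by simp
  then show "norm (point_weight q k) \<le> inverse q ^ k / sqrt (q - 1)"
    unfolding point_weight_def exp_minus_half_scaled_point[OF assms]
    using assms by (simp add: mult_left_le divide_right_mono)
qed

lemma summable_point_weight_mult:
  assumes "1 < q" "\<And>y. 0 \<le> c y" "\<And>y. c y \<le> 1"
  shows "summable (\<lambda>k. point_weight q k * c (scaled_point q k))"
proof (rule summable_comparison_test'[OF summable_point_weight[OF assms(1)]])
  show "norm (point_weight q k * c (scaled_point q k)) \<le> point_weight q k" for k
    using point_weight_pos[of q k] assms(2,3) by (simp add: abs_mult mult_left_le)
qed

lemma pN_eq_point_weight:
  assumes "1 < q"
  shows "pN q k = point_weight q k / (\<Sum>j. point_weight q j)"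
proof -
  let ?p = "inverse q ^ 2"
  define C where "C = exp (qpoch_log_tail ?p 0) * sqrt (q - 1)"
  have summand: "inverse q ^ j / qpoch ?p ?p j = C * point_weight q j" for j
  proof -
    have "inverse q ^ j / qpoch ?p ?p j
        = inverse q ^ j * exp (qpoch_log_tail ?p 0) * exp (- qpoch_log_tail ?p j)"
      using inverse_power2_bounds[OF assms]
      by (simp add: qpoch_eq_exp_log_tail exp_diff exp_minus divide_inverse)
    also have "\<dots> = C * point_weight q j"
      unfolding point_weight_def exp_minus_half_scaled_point[OF assms] C_def using assms by simp
    finally show ?thesis .
  qed
  have "e_q ?p (inverse q) = C * (\<Sum>j. point_weight q j)"
    unfolding e_q_def summand by (rule suminf_mult[OF summable_point_weight[OF assms]])
  then have "pN q k = C * point_weight q k / (C * (\<Sum>j. point_weight q j))"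
    unfolding pN_def summand by simp
  also have "\<dots> = point_weight q k / (\<Sum>j. point_weight q j)"
    using assms by (simp add: C_def)
  finally show ?thesis .
qed

lemma measure_density_count_space_nat:
  fixes f :: "nat \<Rightarrow> real"
  assumes nonneg: "\<And>k. 0 \<le> f k" and summable: "summable f"
  shows "measure (density (count_space UNIV) (\<lambda>k. ennreal (f k))) A = (\<Sum>k. f k * indicator A k)"
proof -
  have nonneg_A: "\<And>k. 0 \<le> f k * indicator A k"
    using nonneg by simp
  have summable_A: "summable (\<lambda>k. f k * indicator A k)"
    by (rule summable_comparison_test'[OF summable]) (use nonneg in \<open>auto split: split_indicator\<close>)
  have "emeasure (density (count_space UNIV) (\<lambda>k. ennreal (f k))) A = (\<Sum>k. ennreal (f k * indicator A k))"
    by (simp add: emeasure_density nn_integral_count_space_nat)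
      (intro suminf_cong, simp split: split_indicator)
  also have "\<dots> = ennreal (\<Sum>k. f k * indicator A k)"
    by (rule suminf_ennreal2[OF nonneg_A summable_A])
  finally show ?thesis
    unfolding measure_def using suminf_nonneg[OF summable_A nonneg_A] by simp
qed

lemma scaled_law_eq_distr: "scaled_law q = distr (N_law q) borel (scaled_point q)"
  by (simp add: scaled_law_def scaled_point_def[abs_def])

lemma cdf_scaled_law:
  assumes "1 < q"
  shows "cdf (scaled_law q) x
    = (\<Sum>k. point_weight q k * indicator {..x} (scaled_point q k)) / (\<Sum>k. point_weight q k)"
proof -
  have pN_fun: "pN q = (\<lambda>k. point_weight q k / (\<Sum>j. point_weight q j))"
    by (intro ext pN_eq_point_weight[OF assms])
  have summable_pN: "summable (pN q)"
    unfolding pN_fun by (intro summable_divide summable_point_weight[OF assms])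
  have pN_nonneg: "0 \<le> pN q k" for k
    using point_weight_pos[of q] summable_point_weight[OF assms]
    by (simp add: pN_eq_point_weight[OF assms] less_imp_le suminf_pos)
  have "cdf (scaled_law q) x = measure (N_law q) (scaled_point q -` {..x})"
    unfolding cdf_def scaled_law_eq_distr by (subst measure_distr) (simp_all add: N_law_def)
  also have "\<dots> = (\<Sum>k. pN q k * indicator {..x} (scaled_point q k))"
    unfolding N_law_def by (simp add: measure_density_count_space_nat[OF pN_nonneg summable_pN] indicator_vimage)
  also have "\<dots> = (\<Sum>k. point_weight q k * indicator {..x} (scaled_point q k) / (\<Sum>k. point_weight q k))"
    by (simp add: pN_eq_point_weight[OF assms])
  also have "\<dots> = (\<Sum>k. point_weight q k * indicator {..x} (scaled_point q k)) / (\<Sum>k. point_weight q k)"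
    by (rule suminf_divide[OF summable_point_weight_mult[OF assms]]) simp_all
  finally show ?thesis .
qed

definition step_function :: "real \<Rightarrow> real \<Rightarrow> (nat \<Rightarrow> real) \<Rightarrow> real \<Rightarrow> ennreal" where
  "step_function a h w t = (\<Sum>k. ennreal (w k) * indicator {a + h * real k ..< a + h * real k + h} t)"

lemma borel_measurable_step_function [measurable]: "step_function a h w \<in> borel_measurable borel"
  unfolding step_function_def by measurable

lemma nn_integral_step_function:
  assumes "0 < h" "\<And>k. 0 \<le> w k" "summable w"
  shows "(\<integral>\<^sup>+t. step_function a h w t \<partial>lborel) = ennreal (h * (\<Sum>k. w k))"
proof -
  have "(\<integral>\<^sup>+t. step_function a h w t \<partial>lborel)
      = (\<Sum>k. \<integral>\<^sup>+t. ennreal (w k) * indicator {a + h * real k ..< a + h * real k + h} t \<partial>lborel)"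
    unfolding step_function_def by (rule nn_integral_suminf) simp
  also have "\<dots> = (\<Sum>k. ennreal (h * w k))"
    using assms by (simp add: nn_integral_cmult_indicator ennreal_mult'[symmetric] mult.commute)
  also have "\<dots> = ennreal (\<Sum>k. h * w k)"
    using assms by (intro suminf_ennreal2 summable_mult) auto
  finally show ?thesis
    using assms by (simp add: suminf_mult)
qed

lemma step_function_below:
  assumes "0 < h" "t < a"
  shows "step_function a h w t = 0"
proof -
  have "(indicator {a + h * real k ..< a + h * real k + h} t :: ennreal) = 0" for k
  proof -
    have "t < a + h * real k" using assms mult_nonneg_nonneg[of h "real k"] by linarith
    then show ?thesis by simp
  qed
  then show ?thesis by (simp add: step_function_def)
qed

lemma step_function_cell:
  assumes "0 < h" "a \<le> t"
  defines "k \<equiv> nat \<lfloor>(t - a) / h\<rfloor>"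
  shows "a + h * real k \<le> t" and "t < a + h * real k + h"
    and "step_function a h w t = ennreal (w k)"
proof -
  have cell_iff: "a + h * real j \<le> t \<and> t < a + h * real j + h \<longleftrightarrow> j = k" for j
  proof -
    have "a + h * real j \<le> t \<and> t < a + h * real j + h \<longleftrightarrow> real j \<le> (t - a) / h \<and> (t - a) / h < real j + 1"
      using assms(1) by (simp add: field_simps)
    also have "\<dots> \<longleftrightarrow> \<lfloor>(t - a) / h\<rfloor> = int j"
      by (simp add: floor_eq_iff)
    also have "\<dots> \<longleftrightarrow> j = k"
      using assms by (auto simp: k_def)
    finally show ?thesis .
  qed
  then show "a + h * real k \<le> t" "t < a + h * real k + h" by auto
  have "step_function a h w t = (\<Sum>j. if j = k then ennreal (w k) else 0)"
    unfolding step_function_def by (intro suminf_cong) (auto simp: cell_iff split: split_indicator)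
  also have "\<dots> = ennreal (w k)"
    using sums_single[of k "\<lambda>_. ennreal (w k)"] by (simp add: sums_iff)
  finally show "step_function a h w t = ennreal (w k)" .
qed

definition weight_step :: "real \<Rightarrow> (real \<Rightarrow> real) \<Rightarrow> real \<Rightarrow> ennreal" where
  "weight_step q c =
     step_function (ln (q - 1)) (2 * ln q) (\<lambda>k. point_weight q k * c (scaled_point q k))"

lemma scaled_point_eq_grid: "scaled_point q k = ln (q - 1) + 2 * ln q * real k"
  by (simp add: scaled_point_def)

lemma nn_integral_weight_step:
  assumes "1 < q" "\<And>y. 0 \<le> c y" "\<And>y. c y \<le> 1"
  shows "(\<integral>\<^sup>+t. weight_step q c t \<partial>lborel)
    = ennreal (2 * ln q * (\<Sum>k. point_weight q k * c (scaled_point q k)))"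
  unfolding weight_step_def
  using assms point_weight_pos[of q] summable_point_weight_mult[OF assms]
  by (intro nn_integral_step_function) (simp_all add: less_imp_le)

lemma cdf_scaled_law_eq_ratio:
  assumes "1 < q"
  shows "cdf (scaled_law q) x
    = enn2real (\<integral>\<^sup>+t. weight_step q (indicator {..x}) t \<partial>lborel)
      / enn2real (\<integral>\<^sup>+t. weight_step q (\<lambda>_. 1) t \<partial>lborel)"
proof -
  let ?S = "\<lambda>c. \<Sum>k. point_weight q k * c (scaled_point q k)"
  have integral_eq: "enn2real (\<integral>\<^sup>+t. weight_step q c t \<partial>lborel) = 2 * ln q * ?S c"
    if "\<And>y. 0 \<le> c y" "\<And>y. c y \<le> 1" for c
  proof -
    have "0 \<le> ?S c"
      using summable_point_weight_mult[OF assms that] point_weight_pos[of q] that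
      by (intro suminf_nonneg) (simp_all add: less_imp_le)
    then show ?thesis
      using assms by (simp add: nn_integral_weight_step[OF assms that])
  qed
  have "cdf (scaled_law q) x = ?S (indicator {..x}) / ?S (\<lambda>_. 1)"
    by (simp add: cdf_scaled_law[OF assms])
  also have "\<dots> = (2 * ln q * ?S (indicator {..x})) / (2 * ln q * ?S (\<lambda>_. 1))"
    using assms by simp
  also have "\<dots> = enn2real (\<integral>\<^sup>+t. weight_step q (indicator {..x}) t \<partial>lborel)
      / enn2real (\<integral>\<^sup>+t. weight_step q (\<lambda>_. 1) t \<partial>lborel)"
    by (subst (1 2) integral_eq) (simp_all split: split_indicator)
  finally show ?thesis .
qed

definition limit_kernel :: "real \<Rightarrow> real" where
  "limit_kernel t = exp (- (t + exp (- t)) / 2)"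

lemma limit_kernel_pos: "0 < limit_kernel t"
  by (simp add: limit_kernel_def)

lemma borel_measurable_limit_kernel [measurable]: "limit_kernel \<in> borel_measurable borel"
  unfolding limit_kernel_def by (intro borel_measurable_continuous_onI continuous_intros) auto

lemma limit_density_eq: "limit_density t = limit_kernel t / sqrt (2 * pi)"
  by (simp add: limit_density_def limit_kernel_def)

lemma limit_kernel_reflect_substitution:
  assumes "0 < s"
  shows "limit_kernel (- (ln 2 + 2 * ln s)) * (2 / s) = 2 * sqrt 2 * exp (- s\<^sup>2)"
proof -
  have "exp (2 * ln s) = s\<^sup>2"
    using exp_of_nat_mult[of 2 "ln s"] assms by simp
  then have exp_y: "exp (ln 2 + 2 * ln s) = 2 * s\<^sup>2"
    by (simp add: exp_add)
  have exp_half_y: "exp ((ln 2 + 2 * ln s) / 2) = sqrt 2 * s"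
    using assms by (simp add: add_divide_distrib exp_add exp_half_ln)
  have "limit_kernel (- y) = exp (y / 2) / exp (exp y / 2)" for y
    by (simp add: limit_kernel_def exp_diff[symmetric] diff_divide_distrib)
  then have "limit_kernel (- (ln 2 + 2 * ln s)) = sqrt 2 * s / exp (s\<^sup>2)"
    by (simp only: exp_y exp_half_y) simp
  then show ?thesis
    using assms by (simp add: exp_minus field_simps)
qed

lemma nn_integral_limit_kernel: "(\<integral>\<^sup>+t. ennreal (limit_kernel t) \<partial>lborel) = ennreal (sqrt (2 * pi))"
proof -
  \<comment> \<open>The substitution t = - (ln 2 + 2 ln s) turns the kernel into the Gaussian
    2 sqrt 2 exp (- s^2); it is applied to the reflection f because the library rule
    needs an increasing change of variables.\<close>
  define f where "f x = limit_kernel (- x)" for x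
  define g where "g s = ln 2 + 2 * ln s" for s :: real
  have Ioi: "einterval 0 \<infinity> = {0::real<..}"
    by (auto simp: einterval_def)
  have gauss: "has_bochner_integral lborel (\<lambda>s. indicator {0<..} s *\<^sub>R exp (- s\<^sup>2)) (sqrt pi / 2)"
  proof -
    have "AE s in lborel. indicator {0..} s *\<^sub>R exp (- s\<^sup>2) = indicator {0<..} s *\<^sub>R exp (- (s::real)\<^sup>2)"
      using AE_lborel_singleton[of 0] by eventually_elim (auto split: split_indicator)
    then show ?thesis
      using gaussian_moment_0 by (subst (asm) has_bochner_integral_cong_AE) simp_all
  qed
  have integrand: "indicator {0<..} s *\<^sub>R (f (g s) * (2 / s)) = 2 * sqrt 2 * (indicator {0<..} s *\<^sub>R exp (- s\<^sup>2))"
    for s :: real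
  proof (cases "0 < s")
    case True
    then have "f (g s) * (2 / s) = 2 * sqrt 2 * exp (- s\<^sup>2)"
      unfolding f_def g_def by (rule limit_kernel_reflect_substitution)
    then show ?thesis by simp
  qed simp
  have "set_integrable lborel (einterval 0 \<infinity>) (\<lambda>s. f (g s) * (2 / s))"
    unfolding set_integrable_def Ioi integrand
    by (intro integrable_mult_right integrable.intros[OF gauss])
  moreover have "(g has_real_derivative 2 / s) (at s)" if "0 < s" for s
    unfolding g_def using that by (auto intro!: derivative_eq_intros)
  moreover have "isCont f x" for x
    unfolding f_def[abs_def] limit_kernel_def by (intro continuous_intros) auto
  moreover have "isCont (\<lambda>s. 2 / s) s" if "0 < s" for s :: real
    using that by (intro continuous_intros) auto
  moreover have "filterlim g at_bot (at_right 0)"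
    unfolding g_def
    by (subst filterlim_tendsto_add_at_bot_iff[OF tendsto_const])
      (rule filterlim_tendsto_pos_mult_at_bot[OF tendsto_const _ ln_at_0]; simp)
  moreover have "filterlim g at_top at_top"
    unfolding g_def
    by (rule filterlim_tendsto_add_at_top[OF tendsto_const],
        rule filterlim_tendsto_pos_mult_at_top[OF tendsto_const _ ln_at_top]) simp
  ultimately have subst: "set_integrable lborel (einterval (-\<infinity>) \<infinity>) f"
      "(LBINT x=-\<infinity>..\<infinity>. f x) = (LBINT s=0..\<infinity>. f (g s) * (2 / s))"
    using interval_integral_substitution_nonneg[of 0 \<infinity> g "\<lambda>s. 2 / s" f "-\<infinity>" \<infinity>]
    by (auto simp: f_def limit_kernel_pos less_imp_le ereal_tendsto_simps zero_ereal_def)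
  have "(\<integral>\<^sup>+t. ennreal (limit_kernel t) \<partial>lborel) = (\<integral>\<^sup>+x. ennreal (f x) \<partial>lborel)"
    using nn_integral_real_affine[of "\<lambda>t. ennreal (limit_kernel t)" "-1" 0] by (simp add: f_def)
  also have "\<dots> = ennreal (integral\<^sup>L lborel f)"
    using subst(1) by (intro nn_integral_eq_integral)
      (simp_all add: set_integrable_def einterval_eq_UNIV f_def limit_kernel_pos less_imp_le)
  also have "integral\<^sup>L lborel f = (LBINT s=0..\<infinity>. f (g s) * (2 / s))"
    unfolding subst(2)[symmetric]
    by (simp add: interval_lebesgue_integral_def set_lebesgue_integral_def einterval_eq_UNIV)
  also have "\<dots> = integral\<^sup>L lborel (\<lambda>s. 2 * sqrt 2 * (indicator {0<..} s *\<^sub>R exp (- s\<^sup>2)))"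
    by (simp only: interval_lebesgue_integral_def set_lebesgue_integral_def Ioi integrand) simp
  also have "\<dots> = 2 * sqrt 2 * (sqrt pi / 2)"
    by (rule has_bochner_integral_integral_eq[OF has_bochner_integral_mult_right[OF gauss]])
  also have "\<dots> = sqrt (2 * pi)"
    by (simp add: real_sqrt_mult)
  finally show ?thesis .
qed

lemma cdf_limit_law:
  "cdf limit_law x = enn2real (\<integral>\<^sup>+t. ennreal (limit_kernel t * indicator {..x} t) \<partial>lborel) / sqrt (2 * pi)"
proof -
  have "emeasure limit_law {..x} = (\<integral>\<^sup>+t. ennreal (limit_density t) * indicator {..x} t \<partial>lborel)"
    unfolding limit_law_def by (rule emeasure_density) (simp_all add: limit_density_eq)
  also have "\<dots> = (\<integral>\<^sup>+t. ennreal (1 / sqrt (2 * pi)) * ennreal (limit_kernel t * indicator {..x} t) \<partial>lborel)"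
    by (intro nn_integral_cong)
      (simp add: limit_density_eq limit_kernel_pos less_imp_le ennreal_mult'[symmetric] split: split_indicator)
  also have "\<dots> = ennreal (1 / sqrt (2 * pi)) * (\<integral>\<^sup>+t. ennreal (limit_kernel t * indicator {..x} t) \<partial>lborel)"
    by (rule nn_integral_cmult) simp
  finally show ?thesis
    unfolding cdf_def measure_def by (simp add: enn2real_mult)
qed

lemma point_weight_tendsto:
  assumes q: "\<And>n. 1 < qs n" "qs \<longlonglongrightarrow> 1"
    and y: "(\<lambda>n. scaled_point (qs n) (ks n)) \<longlonglongrightarrow> t"
  shows "(\<lambda>n. point_weight (qs n) (ks n)) \<longlonglongrightarrow> limit_kernel t"
proof -
  define E where "E n = exp (- scaled_point (qs n) (ks n))" for n
  have E: "E \<longlonglongrightarrow> exp (- t)"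
    unfolding E_def by (intro tendsto_intros y)
  have lower: "(\<lambda>n. E n / (qs n + 1)) \<longlonglongrightarrow> exp (- t) / 2"
    using tendsto_divide[OF E tendsto_add[OF q(2) tendsto_const[of 1]]] by simp
  have "(\<lambda>n. 1 - (qs n - 1) * E n / (qs n)\<^sup>2) \<longlonglongrightarrow> 1 - (1 - 1) * exp (- t) / 1\<^sup>2"
    by (intro tendsto_intros q(2) E) simp
  from tendsto_divide[OF lower this]
  have upper: "(\<lambda>n. E n / (qs n + 1) / (1 - (qs n - 1) * E n / (qs n)\<^sup>2)) \<longlonglongrightarrow> exp (- t) / 2"
    by simp
  have "E n / (qs n + 1) \<le> qpoch_log_tail (inverse (qs n) ^ 2) (ks n)"
    and "qpoch_log_tail (inverse (qs n) ^ 2) (ks n) \<le> E n / (qs n + 1) / (1 - (qs n - 1) * E n / (qs n)\<^sup>2)"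
    for n unfolding E_def by (rule qpoch_log_tail_scaled_bounds[OF q(1)])+
  then have "(\<lambda>n. qpoch_log_tail (inverse (qs n) ^ 2) (ks n)) \<longlonglongrightarrow> exp (- t) / 2"
    by (intro tendsto_sandwich[OF _ _ lower upper] always_eventually allI)
  then have "(\<lambda>n. point_weight (qs n) (ks n)) \<longlonglongrightarrow> exp (- t / 2) * exp (- (exp (- t) / 2))"
    unfolding point_weight_def by (intro tendsto_intros y) simp
  then show ?thesis
    by (simp add: limit_kernel_def mult_exp_exp diff_divide_distrib)
qed

lemma weight_step_tendsto:
  assumes q: "\<And>n. 1 < qs n" "qs \<longlonglongrightarrow> 1" and c: "isCont c t"
  shows "(\<lambda>n. weight_step (qs n) c t) \<longlonglongrightarrow> ennreal (limit_kernel t * c t)"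
proof -
  define ks where "ks n = nat \<lfloor>(t - ln (qs n - 1)) / (2 * ln (qs n))\<rfloor>" for n
  define y where "y n = scaled_point (qs n) (ks n)" for n
  have "(\<lambda>n. qs n - 1) \<longlonglongrightarrow> 0"
    using tendsto_diff[OF q(2) tendsto_const[of 1]] by simp
  then have "eventually (\<lambda>n. qs n - 1 < exp t) sequentially"
    by (rule order_tendstoD) simp
  then have "eventually (\<lambda>n. ln (qs n - 1) \<le> t) sequentially"
    by eventually_elim (use q(1) ln_le_cancel_iff[of _ "exp t"] in \<open>auto simp: less_imp_le\<close>)
  then have cell: "eventually (\<lambda>n. y n \<le> t \<and> t < y n + 2 * ln (qs n)
      \<and> weight_step (qs n) c t = ennreal (point_weight (qs n) (ks n) * c (y n))) sequentially"
  proof eventually_elim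
    case (elim n)
    have "0 < 2 * ln (qs n)" using q(1)[of n] by simp
    from step_function_cell[OF this elim] show ?case
      by (simp add: weight_step_def ks_def y_def scaled_point_eq_grid)
  qed
  have "(\<lambda>n. t - 2 * ln (qs n)) \<longlonglongrightarrow> t - 2 * ln 1"
    by (intro tendsto_intros q(2)) simp
  then have lower: "(\<lambda>n. t - 2 * ln (qs n)) \<longlonglongrightarrow> t"
    by simp
  have y_lim: "y \<longlonglongrightarrow> t"
  proof (rule tendsto_sandwich[OF _ _ lower tendsto_const])
    show "eventually (\<lambda>n. t - 2 * ln (qs n) \<le> y n) sequentially"
      using cell by eventually_elim simp
    show "eventually (\<lambda>n. y n \<le> t) sequentially"
      using cell by eventually_elim simp
  qed
  have "(\<lambda>n. ennreal (point_weight (qs n) (ks n) * c (y n))) \<longlonglongrightarrow> ennreal (limit_kernel t * c t)"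
    using point_weight_tendsto[OF q y_lim[unfolded y_def]] isCont_tendsto_compose[OF c y_lim]
    by (intro tendsto_ennrealI tendsto_mult)
  then show ?thesis
    by (rule Lim_transform_eventually) (use cell in \<open>eventually_elim, simp\<close>)
qed

lemma exp_dominant_eq_shifted_limit_kernel:
  "exp (1 - t / 2 - exp (- t) / 3) = exp 1 * sqrt (3 / 2) * limit_kernel (ln (3 / 2) + t)"
proof -
  have shift: "exp (- (ln (3 / 2) + t)) = 2 / 3 * exp (- t)"
    unfolding minus_add_distrib exp_add by (simp add: exp_minus)
  have arg: "- (ln (3 / 2) + t + 2 / 3 * exp (- t)) / 2
      = (1 - t / 2 - exp (- t) / 3) - (1 + ln (3 / 2) / 2)"
    by (simp add: field_simps)
  have "limit_kernel (ln (3 / 2) + t) = exp (1 - t / 2 - exp (- t) / 3) / exp (1 + ln (3 / 2) / 2)"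
    unfolding limit_kernel_def shift arg by (rule exp_diff)
  then show ?thesis
    by (simp add: exp_add exp_half_ln)
qed

lemma nn_integral_dominant_finite: "(\<integral>\<^sup>+t. ennreal (exp (1 - t / 2 - exp (- t) / 3)) \<partial>lborel) < \<infinity>"
proof -
  have "(\<integral>\<^sup>+t. ennreal (exp (1 - t / 2 - exp (- t) / 3)) \<partial>lborel)
      = (\<integral>\<^sup>+t. ennreal (exp 1 * sqrt (3 / 2)) * ennreal (limit_kernel (ln (3 / 2) + 1 * t)) \<partial>lborel)"
    by (intro nn_integral_cong)
      (simp add: exp_dominant_eq_shifted_limit_kernel ennreal_mult limit_kernel_pos less_imp_le)
  also have "\<dots> = ennreal (exp 1 * sqrt (3 / 2)) * (\<integral>\<^sup>+t. ennreal (limit_kernel t) \<partial>lborel)"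
    using nn_integral_real_affine[of "\<lambda>t. ennreal (limit_kernel t)" 1 "ln (3 / 2)"]
    by (simp add: nn_integral_cmult)
  finally show ?thesis
    by (simp add: nn_integral_limit_kernel ennreal_mult_less_top)
qed

lemma weight_step_le_dominant:
  assumes q: "1 < q" "q \<le> 2" and c: "\<And>y. 0 \<le> c y" "\<And>y. c y \<le> 1"
  shows "weight_step q c t \<le> ennreal (exp (1 - t / 2 - exp (- t) / 3))"
proof (cases "t < ln (q - 1)")
  case True
  then show ?thesis
    using q by (simp add: weight_step_def step_function_below)
next
  case False
  have h: "0 < 2 * ln q" and le: "ln (q - 1) \<le> t"
    using q False by simp_all
  define k where "k = nat \<lfloor>(t - ln (q - 1)) / (2 * ln q)\<rfloor>"
  define y where "y = scaled_point q k"
  note cell = step_function_cell[OF h le, folded k_def, folded scaled_point_eq_grid y_def]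
  have "ln q \<le> ln 2"
    using q by simp
  then have "ln q < 1"
    using ln_2_less_1 by linarith
  then have y: "- y / 2 \<le> 1 - t / 2" "exp (- t) \<le> exp (- y)"
    using cell(1,2) by simp_all
  have "point_weight q k * c y \<le> point_weight q k"
    using point_weight_pos[of q k] c by (simp add: mult_left_le)
  also have "\<dots> \<le> exp (- y / 2) * exp (- exp (- y) / (q + 1))"
    unfolding point_weight_def y_def using qpoch_log_tail_scaled_bounds(1)[OF q(1), of k] by simp
  also have "\<dots> \<le> exp (1 - t / 2) * exp (- exp (- t) / 3)"
  proof (intro mult_mono)
    have "exp (- t) / 3 \<le> exp (- y) / 3"
      using y(2) by simp
    also have "\<dots> \<le> exp (- y) / (q + 1)"
      using q by (intro divide_left_mono) auto
    finally show "exp (- exp (- y) / (q + 1)) \<le> exp (- exp (- t) / 3)"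
      by simp
  qed (use y(1) in simp_all)
  also have "\<dots> = exp (1 - t / 2 - exp (- t) / 3)"
    by (simp add: mult_exp_exp)
  finally show ?thesis
    using cell(3) by (simp add: weight_step_def y_def ennreal_leI)
qed

lemma nn_integral_weight_step_tendsto:
  assumes q: "\<And>n. 1 < qs n" "qs \<longlonglongrightarrow> 1"
    and c: "c \<in> borel_measurable borel" "\<And>y. 0 \<le> c y" "\<And>y. c y \<le> 1"
    and cont: "AE t in lborel. isCont c t"
  shows "(\<lambda>n. \<integral>\<^sup>+t. weight_step (qs n) c t \<partial>lborel) \<longlonglongrightarrow> (\<integral>\<^sup>+t. ennreal (limit_kernel t * c t) \<partial>lborel)"
proof -
  \<comment> \<open>The domination only holds for q \<le> 2, hence the passage to a tail of the sequence.\<close>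
  obtain N where N: "\<And>n. N \<le> n \<Longrightarrow> qs n < 2"
    using order_tendstoD(2)[OF q(2), of 2] by (auto simp: eventually_sequentially)
  have qs_shift: "(\<lambda>n. qs (n + N)) \<longlonglongrightarrow> 1"
    using q(2) by (rule LIMSEQ_ignore_initial_segment)
  note [measurable] = c(1)
  have "(\<lambda>n. \<integral>\<^sup>+t. weight_step (qs (n + N)) c t \<partial>lborel) \<longlonglongrightarrow> (\<integral>\<^sup>+t. ennreal (limit_kernel t * c t) \<partial>lborel)"
  proof (rule nn_integral_dominated_convergence[where w="\<lambda>t. ennreal (exp (1 - t / 2 - exp (- t) / 3))"])
    show "\<And>n. AE t in lborel. weight_step (qs (n + N)) c t \<le> ennreal (exp (1 - t / 2 - exp (- t) / 3))"
      using weight_step_le_dominant[OF q(1) _ c(2,3)] N by (simp add: less_imp_le)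
    show "AE t in lborel. (\<lambda>n. weight_step (qs (n + N)) c t) \<longlonglongrightarrow> ennreal (limit_kernel t * c t)"
      using cont by eventually_elim (rule weight_step_tendsto[OF q(1) qs_shift])
    show "(\<integral>\<^sup>+t. ennreal (exp (1 - t / 2 - exp (- t) / 3)) \<partial>lborel) < \<infinity>"
      by (rule nn_integral_dominant_finite)
  qed (simp_all add: weight_step_def)
  then show ?thesis
    by (rule LIMSEQ_offset)
qed

lemma enn2real_nn_integral_weight_step_tendsto:
  assumes q: "\<And>n. 1 < qs n" "qs \<longlonglongrightarrow> 1"
    and c: "c \<in> borel_measurable borel" "\<And>y. 0 \<le> c y" "\<And>y. c y \<le> 1"
    and cont: "AE t in lborel. isCont c t"
  shows "(\<lambda>n. enn2real (\<integral>\<^sup>+t. weight_step (qs n) c t \<partial>lborel))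
    \<longlonglongrightarrow> enn2real (\<integral>\<^sup>+t. ennreal (limit_kernel t * c t) \<partial>lborel)"
proof -
  have "(\<integral>\<^sup>+t. ennreal (limit_kernel t * c t) \<partial>lborel) \<le> (\<integral>\<^sup>+t. ennreal (limit_kernel t) \<partial>lborel)"
    using c(2,3) by (intro nn_integral_mono ennreal_leI) (simp add: limit_kernel_pos mult_left_le)
  then have "(\<integral>\<^sup>+t. ennreal (limit_kernel t * c t) \<partial>lborel)
      = ennreal (enn2real (\<integral>\<^sup>+t. ennreal (limit_kernel t * c t) \<partial>lborel))"
    by (intro ennreal_enn2real[symmetric]) (simp add: nn_integral_limit_kernel le_less_trans)
  with nn_integral_weight_step_tendsto[OF assms] show ?thesis
    by (intro tendsto_enn2real) simp_all
qed

theorem proposition6p2: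
  fixes qs :: "nat \<Rightarrow> real"
  assumes "\<And>n. qs n > 1" and "qs \<longlonglongrightarrow> 1"
  shows "weak_conv_m (\<lambda>n. scaled_law (qs n)) limit_law"
proof -
  have "(\<lambda>n. cdf (scaled_law (qs n)) x) \<longlonglongrightarrow> cdf limit_law x" for x
  proof -
    have "AE t in lborel. isCont (indicator {..x} :: real \<Rightarrow> real) t"
      using AE_lborel_singleton[of x] by eventually_elim (simp add: isCont_indicator frontier_real_atMost)
    then have "(\<lambda>n. enn2real (\<integral>\<^sup>+t. weight_step (qs n) (indicator {..x}) t \<partial>lborel)
          / enn2real (\<integral>\<^sup>+t. weight_step (qs n) (\<lambda>_. 1) t \<partial>lborel))
        \<longlonglongrightarrow> enn2real (\<integral>\<^sup>+t. ennreal (limit_kernel t * indicator {..x} t) \<partial>lborel)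
          / enn2real (\<integral>\<^sup>+t. ennreal (limit_kernel t * 1) \<partial>lborel)"
      by (intro tendsto_divide enn2real_nn_integral_weight_step_tendsto assms)
        (auto simp: nn_integral_limit_kernel split: split_indicator)
    then show ?thesis
      by (simp add: cdf_scaled_law_eq_ratio[OF assms(1)] cdf_limit_law nn_integral_limit_kernel)
  qed
  then show ?thesis
    by (simp add: weak_conv_m_def weak_conv_def)
qed

end
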